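(* Let $t \ge 0$ and consider the three-taxon multispecies coalescent described in the context, with species tree of topology $AB|C$ and internal branch length $t$, and $L$ independent loci. For $XY\in\{AB,AC,BC\}$ let $N_{XY}$ be the number of loci whose gene-tree topology is $XY|Z$ (where $Z$ is the remaining species). Let $\mathbb{P}_L$ be the probability of the failure event of the $R^*$/STAR/MDC method, namely $N_{AB} < \max\{N_{AC},N_{BC}\}$. Then the limit $\alpha_{R^*}(t)=-\lim_{L\to\infty}\frac1L\ln\mathbb{P}_L$ exists and $$\alpha_{R^*}(t) = -\ln\left(2\sqrt{\tfrac13 e^{-t}\left(1-\tfrac23 e^{-t}\right)} + \tfrac13 e^{-t}\right).$$ Moreover, as $t\to0$, $\alpha_{R^*}(t)=\frac34 t^2+O(t^3)$, and as $t\to+\infty$, $\alpha_{R^*}(t) - \frac{t}{2} \to -\frac12\ln\frac43$.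
   Context: Multispecies coalescent, three-taxon case: ultrametric rooted species tree on species $A,B,C$ with topology $AB|C$, equal population sizes, time in units of $N$ generations. Populations $A,B,C$, ancestral population $AB$ existing between divergence times $\tau_{AB}$ and $\tau_{ABC}$, and root population $ABC$ above $\tau_{ABC}$; $t=\tau_{ABC}-\tau_{AB}$. For each locus one lineage is sampled from each of $A,B,C$; backwards in time, each pair of lineages in the same population coalesces independently at rate $1$. Loci are independent. Thus with probability $1-e^{-t}$ the $A$ and $B$ lineages coalesce in population $AB$ (gene tree topology $AB|C$), and with probability $e^{-t}$ they do not, in which case each of the three topologies $AB|C$, $AC|B$, $BC|A$ occurs with probability $1/3$. Gene trees are known exactly. The $R^*$ consensus, STAR and MDC methods all output the most frequent gene-tree topology in this three-taxon setting. *)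

theory Defs
  imports "HOL-Probability.Probability" "HOL-Library.Landau_Symbols"
begin

text \<open>Rooted gene-tree topologies on three taxa A, B, C:
  AB means AB|C, AC means AC|B, BC means BC|A.\<close>
datatype topo = AB | AC | BC

text \<open>Gene-tree topology distribution at one locus under the three-taxon
  multispecies coalescent with species tree AB|C and internal branch length t:
  with probability 1 - exp(-t) the A and B lineages coalesce in population AB
  (topology AB|C); otherwise each of the three topologies has probability 1/3.\<close>
definition gene_tree_pmf :: "real \<Rightarrow> topo pmf" where
  "gene_tree_pmf t =
     bind_pmf (bernoulli_pmf (1 - exp (- t)))
       (\<lambda>c. if c then return_pmf AB else pmf_of_set {AB, AC, BC})"

definition N :: "topo \<Rightarrow> topo list \<Rightarrow> nat" where
  "N xy gs = length (filter (\<lambda>g. g = xy) gs)"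

definition fail_prob :: "real \<Rightarrow> nat \<Rightarrow> real" where
  "fail_prob t L =
     measure_pmf.prob (replicate_pmf L (gene_tree_pmf t))
       {gs. N AB gs < max (N AC gs) (N BC gs)}"

definition alpha_Rstar :: "real \<Rightarrow> real" where
  "alpha_Rstar t =
     - ln (2 * sqrt (1/3 * exp (- t) * (1 - 2/3 * exp (- t))) + 1/3 * exp (- t))"

end

theory Submission
  imports Defs "HOL-Combinatorics.Transposition" "HOL-Real_Asymp.Real_Asymp"
begin

text \<open>Write \<open>p = 1 - 2/3 e\<^sup>-\<^sup>t\<close> for the probability of topology AB|C at one locus and
  \<open>q = 1/3 e\<^sup>-\<^sup>t\<close> for each of AC|B and BC|A. The method fails iff \<open>N\<^sub>A\<^sub>C - N\<^sub>A\<^sub>B > 0\<close> or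
  \<open>N\<^sub>B\<^sub>C - N\<^sub>A\<^sub>B > 0\<close>. A Chernoff bound with tilt \<open>z = sqrt (p/q)\<close> bounds each of these events by
  \<open>\<rho>\<^sup>L\<close>, where \<open>\<rho> = p/z + q z + q = 2 sqrt (p q) + q\<close>, so \<open>P\<^sub>L \<le> 2 \<rho>\<^sup>L\<close>.
  Conversely, under the tilted distribution AB and AC are equally likely. After \<open>m\<close> loci the
  difference \<open>N\<^sub>A\<^sub>C - N\<^sub>A\<^sub>B\<close> takes at most \<open>2m + 1\<close> values, so by Cauchy-Schwarz two independent
  samples agree on it with probability at least \<open>1/(2m+1)\<close>; concatenating the first sample
  with the AB/AC-swap of the second turns such a pair into a sample of twice the length with
  difference 0. Hence \<open>N\<^sub>A\<^sub>C - N\<^sub>A\<^sub>B = 1\<close> has tilted probability of order \<open>1/L\<close>, and undoing the tilt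
  on this event costs exactly the factor \<open>\<rho>\<^sup>L/z\<close>. Thus \<open>c \<rho>\<^sup>L/(L+1) \<le> P\<^sub>L \<le> 2 \<rho>\<^sup>L\<close> and
  \<open>-ln P\<^sub>L / L \<longrightarrow> -ln \<rho> = \<alpha>\<^sub>R\<^sub>*(t)\<close>.\<close>

lemma finite_lists_length: "finite {xs :: 'a::finite list. length xs = n}"
  using finite_lists_length_eq[of "UNIV :: 'a set" n] by simp

lemma sum_prod_list_lists_length:
  fixes u :: "'a::finite \<Rightarrow> 'b::comm_semiring_1"
  shows "(\<Sum>xs | length xs = n. prod_list (map u xs)) = sum u UNIV ^ n"
proof (induction n)
  case (Suc n)
  have "{xs :: 'a list. length xs = Suc n} = (\<lambda>(x, xs). x # xs) ` (UNIV \<times> {xs. length xs = n})"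
    by (auto simp: length_Suc_conv)
  then have "(\<Sum>xs | length xs = Suc n. prod_list (map u xs))
      = (\<Sum>(x, xs) \<in> UNIV \<times> {xs. length xs = n}. u x * prod_list (map u xs))"
    by (simp add: sum.reindex inj_on_def case_prod_unfold)
  also have "\<dots> = sum u UNIV * (\<Sum>xs | length xs = n. prod_list (map u xs))"
    by (simp add: sum_product sum.cartesian_product)
  finally show ?case using Suc by simp
qed simp

lemma pmf_replicate_pmf:
  "pmf (replicate_pmf n p) xs = (if length xs = n then prod_list (map (pmf p) xs) else 0)"
proof (induction n arbitrary: xs)
  case (Suc n)
  have "replicate_pmf (Suc n) p = map_pmf (\<lambda>(x, xs). x # xs) (pair_pmf p (replicate_pmf n p))"
    by (simp add: pair_pmf_def map_bind_pmf bind_assoc_pmf bind_return_pmf map_pmf_def)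
  moreover have "inj (\<lambda>(x :: 'a, xs). x # xs)"
    by (auto simp: inj_def)
  ultimately have "pmf (replicate_pmf (Suc n) p) (x # xs) = pmf p x * pmf (replicate_pmf n p) xs"
    for x xs using pmf_map_inj'[of "\<lambda>(x, xs). x # xs" _ "(x, xs)"] by (simp add: pmf_pair)
  moreover have "pmf (replicate_pmf (Suc n) p) [] = 0"
    unfolding pmf_eq_0_set_pmf set_replicate_pmf by simp
  ultimately show ?case
    using Suc by (cases xs) simp_all
qed (simp add: indicator_def)

lemma measure_replicate_pmf:
  fixes p :: "'a::finite pmf"
  shows "measure_pmf.prob (replicate_pmf n p) S
       = (\<Sum>xs | length xs = n \<and> xs \<in> S. prod_list (map (pmf p) xs))"
proof -
  have "S \<inter> set_pmf (replicate_pmf n p) = {xs. length xs = n \<and> xs \<in> S} \<inter> set_pmf (replicate_pmf n p)"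
    by (auto simp: set_replicate_pmf)
  then have "measure_pmf.prob (replicate_pmf n p) S
           = measure_pmf.prob (replicate_pmf n p) {xs. length xs = n \<and> xs \<in> S}"
    by (metis measure_Int_set_pmf)
  also have "\<dots> = (\<Sum>xs | length xs = n \<and> xs \<in> S. pmf (replicate_pmf n p) xs)"
    by (rule measure_measure_pmf_finite) (simp add: finite_lists_length)
  finally show ?thesis
    by (simp add: pmf_replicate_pmf)
qed

definition count_diff :: "'a \<Rightarrow> 'a \<Rightarrow> 'a list \<Rightarrow> int" where
  "count_diff x y xs = int (count_list xs x) - int (count_list xs y)"

lemma count_diff_simps [simp]:
  "count_diff x y [] = 0"
  "count_diff x y (a # xs) = (if a = x then 1 else 0) - (if a = y then 1 else 0) + count_diff x y xs"
  "count_diff x y (xs @ ys) = count_diff x y xs + count_diff x y ys"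
  by (simp_all add: count_diff_def)

lemma count_diff_map_transpose:
  "count_diff x y (map (Transposition.transpose x y) xs) = - count_diff x y xs"
  using count_list_map_conv[OF inj_transpose, of x y xs x] count_list_map_conv[OF inj_transpose, of x y xs y]
  by (simp add: count_diff_def)

lemma abs_count_diff_le: "\<bar>count_diff x y xs\<bar> \<le> int (length xs)"
  using count_le_length[of xs x] count_le_length[of xs y] by (simp add: count_diff_def)

lemma prod_list_map_mult:
  fixes f g :: "'a \<Rightarrow> 'b::comm_monoid_mult"
  shows "prod_list (map (\<lambda>a. f a * g a) xs) = prod_list (map f xs) * prod_list (map g xs)"
  by (induction xs) (simp_all add: ac_simps)

lemma prod_list_map_nonneg:
  fixes f :: "'a \<Rightarrow> 'b::ordered_semiring_1"
  shows "(\<And>a. 0 \<le> f a) \<Longrightarrow> 0 \<le> prod_list (map f xs)"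
  by (rule prod_list_nonneg) auto

definition tilt :: "'a \<Rightarrow> 'a \<Rightarrow> real \<Rightarrow> 'a \<Rightarrow> real" where
  "tilt x y z a = (if a = x then z else if a = y then inverse z else 1)"

lemma prod_list_tilt:
  assumes "x \<noteq> y" "z \<noteq> 0"
  shows "prod_list (map (tilt x y z) xs) = z powi count_diff x y xs"
  by (induction xs) (use assms in \<open>auto simp: tilt_def power_int_add power_int_minus\<close>)

lemma tilted_upper_bound:
  fixes w :: "'a::finite \<Rightarrow> real"
  assumes "x \<noteq> y" "z \<ge> 1" "\<And>a. w a \<ge> 0"
  shows "(\<Sum>xs | length xs = n \<and> count_diff x y xs > 0. prod_list (map w xs))
       \<le> (\<Sum>a\<in>UNIV. w a * tilt x y z a) ^ n"
proof -
  have "prod_list (map w xs) \<le> prod_list (map (\<lambda>a. w a * tilt x y z a) xs)"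
    if "count_diff x y xs > 0" for xs
  proof -
    have "1 \<le> z powi count_diff x y xs"
      using assms(2) that by (simp add: one_le_power_int)
    moreover have "0 \<le> prod_list (map w xs)"
      using assms(3) by (rule prod_list_map_nonneg)
    ultimately show ?thesis
      using assms(1,2) mult_left_mono[of 1 "z powi count_diff x y xs" "prod_list (map w xs)"]
      by (simp add: prod_list_map_mult prod_list_tilt)
  qed
  then have "(\<Sum>xs | length xs = n \<and> count_diff x y xs > 0. prod_list (map w xs))
      \<le> (\<Sum>xs | length xs = n \<and> count_diff x y xs > 0. prod_list (map (\<lambda>a. w a * tilt x y z a) xs))"
    by (intro sum_mono) auto
  also have "\<dots> \<le> (\<Sum>xs | length xs = n. prod_list (map (\<lambda>a. w a * tilt x y z a) xs))"
    using assms by (intro sum_mono2 finite_lists_length prod_list_map_nonneg) (auto simp: tilt_def)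
  finally show ?thesis
    by (simp only: sum_prod_list_lists_length)
qed

lemma count_diff_collision_bound:
  fixes w :: "'a::finite \<Rightarrow> real"
  assumes "sum w UNIV = 1"
  shows "1 / (2 * real m + 1) \<le> (\<Sum>(xs, ys) | length xs = m \<and> length ys = m \<and>
            count_diff x y xs = count_diff x y ys. prod_list (map w xs) * prod_list (map w ys))"
    (is "_ \<le> sum _ ?P")
proof -
  define A where "A s = {xs. length xs = m \<and> count_diff x y xs = s}" for s
  define Q where "Q s = (\<Sum>xs\<in>A s. prod_list (map w xs))" for s
  define T where "T = {- int m..int m}"
  have range: "count_diff x y ` {xs. length xs = m} \<subseteq> T"
  proof
    fix d assume "d \<in> count_diff x y ` {xs. length xs = m}"
    then obtain xs where "length xs = m" "d = count_diff x y xs"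
      by auto
    then show "d \<in> T"
      using abs_count_diff_le[of x y xs] by (simp add: T_def abs_le_iff)
  qed
  have "sum Q T = (\<Sum>xs | length xs = m. prod_list (map w xs))"
    unfolding Q_def A_def T_def using sum.group[OF finite_lists_length _ range[unfolded T_def]]
    by (simp add: conj_commute)
  also have "\<dots> = 1"
    by (simp add: sum_prod_list_lists_length assms)
  finally have "1 \<le> (\<Sum>s\<in>T. (Q s)\<^sup>2) * (2 * real m + 1)"
    using sum_squared_le_sum_of_squares[of Q T] by (simp add: T_def add.commute)
  then have "1 / (2 * real m + 1) \<le> (\<Sum>s\<in>T. (Q s)\<^sup>2)"
    by (simp add: field_simps)
  also have "\<dots> = (\<Sum>s\<in>T. \<Sum>(xs, ys) \<in> A s \<times> A s. prod_list (map w xs) * prod_list (map w ys))"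
    by (simp add: Q_def power2_eq_square sum_product sum.cartesian_product)
  also have "\<dots> = sum (\<lambda>(xs, ys). prod_list (map w xs) * prod_list (map w ys)) ?P"
  proof -
    have "{p \<in> ?P. count_diff x y (fst p) = s} = A s \<times> A s" for s
      by (auto simp: A_def)
    moreover have "(\<lambda>p. count_diff x y (fst p)) ` ?P \<subseteq> T"
      using range by auto
    moreover have "finite ?P"
      by (rule finite_subset[of _ "{xs. length xs = m} \<times> {xs. length xs = m}"])
         (auto simp: finite_lists_length)
    ultimately show ?thesis
      using sum.group[of ?P T "\<lambda>p. count_diff x y (fst p)"] by (simp add: T_def)
  qed
  finally show ?thesis .
qed

text \<open>The swap of \<open>x\<close> and \<open>y\<close> negates \<open>count_diff x y\<close> and preserves the weight, so gluing
  \<open>xs\<close>, the swapped \<open>ys\<close> and \<open>ws\<close> maps the colliding pairs injectively into the target event.\<close>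

lemma count_diff_hitting_bound:
  fixes w :: "'a::finite \<Rightarrow> real"
  assumes nonneg: "\<And>a. w a \<ge> 0" and total: "sum w UNIV = 1" and symmetric: "w x = w y"
  shows "prod_list (map w ws) / (2 * real m + 1)
       \<le> (\<Sum>xs | length xs = 2 * m + length ws \<and> count_diff x y xs = count_diff x y ws.
             prod_list (map w xs))"
    (is "_ \<le> sum _ ?E")
proof -
  define P where "P = {(xs, ys). length xs = m \<and> length ys = m \<and> count_diff x y xs = count_diff x y ys}"
  define glue where "glue = (\<lambda>(xs, ys). xs @ map (Transposition.transpose x y) ys @ ws)"
  have "w \<circ> Transposition.transpose x y = w"
    using symmetric by (auto simp: fun_eq_iff Transposition.transpose_def)
  then have weight: "prod_list (map w (glue p))
      = prod_list (map w (fst p)) * prod_list (map w (snd p)) * prod_list (map w ws)" for p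
    by (simp add: glue_def case_prod_unfold)
  have "inj_on glue P"
    by (auto simp: inj_on_def glue_def P_def inj_map_eq_map[OF inj_transpose])
  moreover have "glue ` P \<subseteq> ?E"
    by (auto simp: glue_def P_def count_diff_map_transpose)
  moreover have "finite ?E"
    by (rule finite_subset[OF _ finite_lists_length]) auto
  ultimately have "sum (prod_list \<circ> map w) (glue ` P) \<le> sum (prod_list \<circ> map w) ?E"
    using nonneg by (intro sum_mono2) (auto intro: prod_list_map_nonneg)
  moreover have "prod_list (map w ws) / (2 * real m + 1) \<le> sum (prod_list \<circ> map w) (glue ` P)"
  proof -
    have "prod_list (map w ws) / (2 * real m + 1)
        \<le> prod_list (map w ws) * (\<Sum>(xs, ys)\<in>P. prod_list (map w xs) * prod_list (map w ys))"
      using count_diff_collision_bound[OF total, of m x y] prod_list_map_nonneg[of w ws] nonneg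
      unfolding P_def divide_inverse by (intro mult_left_mono) auto
    also have "\<dots> = sum (prod_list \<circ> map w \<circ> glue) P"
      by (simp add: sum_distrib_left weight case_prod_unfold mult_ac)
    also have "\<dots> = sum (prod_list \<circ> map w) (glue ` P)"
      by (simp add: sum.reindex \<open>inj_on glue P\<close>)
    finally show ?thesis .
  qed
  ultimately show ?thesis
    by simp
qed

lemma count_diff_eq_one_lower_bound:
  fixes w :: "'a::finite \<Rightarrow> real"
  assumes nonneg: "\<And>a. w a \<ge> 0" and total: "sum w UNIV = 1" and symmetric: "w x = w y"
    and distinct: "x \<noteq> y" "u \<noteq> x" "u \<noteq> y" and "L \<ge> 1"
  shows "w x * w u / (real L + 1) \<le> (\<Sum>xs | length xs = L \<and> count_diff x y xs = 1. prod_list (map w xs))"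
proof -
  have le_1: "w a \<le> 1" for a
    using member_le_sum[of a UNIV w] nonneg total by simp
  \<comment> \<open>Words over \<open>{x, y}\<close> have \<open>count_diff x y\<close> of the parity of their length, so even \<open>L\<close>
    needs the third letter \<open>u\<close> in the witness.\<close>
  define m where "m = (L - 1) div 2"
  have "L = 2 * m + length [x] \<or> L = 2 * m + length [x, u]"
    using \<open>L \<ge> 1\<close> unfolding m_def by simp presburger
  then show ?thesis
  proof
    assume 1: "L = 2 * m + length [x]"
    have "w x * w u / (real L + 1) \<le> w x / (2 * real m + 1)"
      using 1 nonneg le_1[of u] by (intro frac_le mult_right_le_one_le) (auto simp: add_pos_nonneg)
    then show ?thesis
      using count_diff_hitting_bound[OF nonneg total symmetric, of "[x]" m] 1 distinct by simp
  next
    assume 2: "L = 2 * m + length [x, u]"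
    have "w x * w u / (real L + 1) \<le> w x * w u / (2 * real m + 1)"
      using 2 nonneg by (intro divide_left_mono) auto
    then show ?thesis
      using count_diff_hitting_bound[OF nonneg total symmetric, of "[x, u]" m] 2 distinct by simp
  qed
qed

lemma ln_rate_squeeze:
  fixes f :: "nat \<Rightarrow> real"
  assumes "c > 0" "C > 0" "\<rho> > 0"
    and lower: "\<And>L. L \<ge> 1 \<Longrightarrow> c * \<rho> ^ L / (real L + 1) \<le> f L"
    and upper: "\<And>L. f L \<le> C * \<rho> ^ L"
  shows "(\<lambda>L. - (ln (f L) / L)) \<longlonglongrightarrow> - ln \<rho>"
proof (rule tendsto_sandwich)
  have bounds: "- ln \<rho> - ln C / L \<le> - (ln (f L) / L)"
    "- (ln (f L) / L) \<le> - ln \<rho> - ln c / L + ln (real L + 1) / L" if "L \<ge> 1" for L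
  proof -
    have pos: "0 < c * \<rho> ^ L / (real L + 1)"
      using assms(1,3) by simp
    have "ln (c * \<rho> ^ L / (real L + 1)) \<le> ln (f L)"
      using lower[OF that] pos by (rule ln_mono)
    moreover have "ln (f L) \<le> ln (C * \<rho> ^ L)"
      using upper by (rule ln_mono) (use pos lower[OF that] in linarith)
    ultimately have "ln c + L * ln \<rho> - ln (real L + 1) \<le> ln (f L)" "ln (f L) \<le> ln C + L * ln \<rho>"
      using assms(1-3) by (simp_all add: ln_mult ln_div ln_realpow)
    then have "(ln c + L * ln \<rho> - ln (real L + 1)) / L \<le> ln (f L) / L"
      "ln (f L) / L \<le> (ln C + L * ln \<rho>) / L"
      by (simp_all add: divide_right_mono)
    then show "- ln \<rho> - ln C / L \<le> - (ln (f L) / L)"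
      "- (ln (f L) / L) \<le> - ln \<rho> - ln c / L + ln (real L + 1) / L"
      using that by (simp_all add: add_divide_distrib diff_divide_distrib)
  qed
  show "\<forall>\<^sub>F L in sequentially. - ln \<rho> - ln C / L \<le> - (ln (f L) / L)"
    "\<forall>\<^sub>F L in sequentially. - (ln (f L) / L) \<le> - ln \<rho> - ln c / L + ln (real L + 1) / L"
    using bounds by (auto intro: eventually_sequentiallyI[of 1])
  show "(\<lambda>L. - ln \<rho> - ln C / real L) \<longlonglongrightarrow> - ln \<rho>"
    "(\<lambda>L. - ln \<rho> - ln c / real L + ln (real L + 1) / real L) \<longlonglongrightarrow> - ln \<rho>"
    by real_asymp+
qed

lemma UNIV_topo: "UNIV = {AB, AC, BC}"
  using topo.exhaust by auto

instance topo :: finite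
  by standard (simp add: UNIV_topo)

lemma N_eq_count_list: "N x gs = count_list gs x"
  by (induction gs) (simp_all add: N_def)

lemma pmf_gene_tree_pmf:
  assumes "t \<ge> 0"
  shows "pmf (gene_tree_pmf t) AB = 1 - 2/3 * exp (- t)"
    and "pmf (gene_tree_pmf t) AC = 1/3 * exp (- t)"
    and "pmf (gene_tree_pmf t) BC = 1/3 * exp (- t)"
proof -
  have "0 \<le> 1 - exp (- t)" "1 - exp (- t) \<le> 1"
    using assms by auto
  then show "pmf (gene_tree_pmf t) AB = 1 - 2/3 * exp (- t)"
    "pmf (gene_tree_pmf t) AC = 1/3 * exp (- t)"
    "pmf (gene_tree_pmf t) BC = 1/3 * exp (- t)"
    unfolding gene_tree_pmf_def
    by (simp_all add: pmf_bind integral_bernoulli_pmf pmf_of_set indicator_def card_insert_if)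
qed

lemma fail_prob_eq_sum:
  "fail_prob t L = (\<Sum>xs | length xs = L \<and> (count_diff AC AB xs > 0 \<or> count_diff BC AB xs > 0).
     prod_list (map (pmf (gene_tree_pmf t)) xs))"
  unfolding fail_prob_def measure_replicate_pmf
  by (simp add: N_eq_count_list count_diff_def less_max_iff_disj)

text \<open>\<open>chernoff_coeff t\<close> is the minimum over \<open>z\<close> of \<open>E z\<^bsup>[g = AC] - [g = AB]\<^esup>\<close> for one gene
  tree \<open>g\<close>; it is attained at \<open>z = optimal_tilt t\<close>.\<close>

definition chernoff_coeff :: "real \<Rightarrow> real" where
  "chernoff_coeff t = 2 * sqrt (1/3 * exp (- t) * (1 - 2/3 * exp (- t))) + 1/3 * exp (- t)"

definition optimal_tilt :: "real \<Rightarrow> real" where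
  "optimal_tilt t = sqrt ((1 - 2/3 * exp (- t)) / (1/3 * exp (- t)))"

lemma
  assumes "t \<ge> 0"
  shows optimal_tilt_ge_1: "optimal_tilt t \<ge> 1"
    and chernoff_coeff_pos: "chernoff_coeff t > 0"
    and gene_tree_tilt_balance:
      "pmf (gene_tree_pmf t) AB * inverse (optimal_tilt t) = pmf (gene_tree_pmf t) AC * optimal_tilt t"
    and chernoff_coeff_eq:
      "chernoff_coeff t = 2 * pmf (gene_tree_pmf t) AC * optimal_tilt t + pmf (gene_tree_pmf t) AC"
proof -
  define p q where "p = 1 - 2/3 * exp (- t)" and "q = 1/3 * exp (- t)"
  have "exp (- t) \<le> 1"
    using assms by simp
  then have pq: "0 < q" "q \<le> p"
    by (auto simp: p_def q_def)
  have z: "optimal_tilt t = sqrt (p / q)"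
    by (simp add: optimal_tilt_def p_def q_def)
  show "optimal_tilt t \<ge> 1"
    using pq by (simp add: z)
  have sq: "optimal_tilt t ^ 2 = p / q"
    using pq by (simp add: z)
  have qz: "q * optimal_tilt t = sqrt (q * p)"
    using pq by (simp add: z real_sqrt_mult real_sqrt_divide field_simps)
  have pmf_pq: "pmf (gene_tree_pmf t) AB = p" "pmf (gene_tree_pmf t) AC = q"
    using pmf_gene_tree_pmf[OF assms] by (simp_all add: p_def q_def)
  show "pmf (gene_tree_pmf t) AB * inverse (optimal_tilt t) = pmf (gene_tree_pmf t) AC * optimal_tilt t"
    using pq sq \<open>optimal_tilt t \<ge> 1\<close> by (simp add: pmf_pq field_simps power2_eq_square)
  show "chernoff_coeff t = 2 * pmf (gene_tree_pmf t) AC * optimal_tilt t + pmf (gene_tree_pmf t) AC"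
  proof -
    have "chernoff_coeff t = 2 * sqrt (q * p) + q"
      by (simp add: chernoff_coeff_def p_def q_def)
    then show ?thesis
      using qz by (simp add: pmf_pq)
  qed
  then show "chernoff_coeff t > 0"
    using pq \<open>optimal_tilt t \<ge> 1\<close> by (simp add: pmf_pq add_pos_nonneg)
qed

lemma gene_tree_tilt_sum:
  assumes "t \<ge> 0" "x \<noteq> AB"
  shows "(\<Sum>a\<in>UNIV. pmf (gene_tree_pmf t) a * tilt x AB (optimal_tilt t) a) = chernoff_coeff t"
proof -
  have "pmf (gene_tree_pmf t) BC = pmf (gene_tree_pmf t) AC"
    using pmf_gene_tree_pmf[OF assms(1)] by simp
  then show ?thesis
    using assms(2) gene_tree_tilt_balance[OF assms(1)] chernoff_coeff_eq[OF assms(1)]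
    by (cases x) (auto simp: UNIV_topo tilt_def)
qed

lemma fail_prob_upper_bound:
  assumes "t \<ge> 0"
  shows "fail_prob t L \<le> 2 * chernoff_coeff t ^ L"
proof -
  let ?w = "pmf (gene_tree_pmf t)"
  let ?E = "\<lambda>x. {xs. length xs = L \<and> count_diff x AB xs > 0}"
  let ?S = "\<lambda>x. \<Sum>xs\<in>?E x. prod_list (map ?w xs)"
  have "fail_prob t L = (\<Sum>xs\<in>?E AC \<union> ?E BC. prod_list (map ?w xs))"
    unfolding fail_prob_eq_sum by (rule sum.cong) auto
  also have "\<dots> \<le> ?S AC + ?S BC"
  proof -
    have "finite (?E x)" for x
      by (rule finite_subset[OF _ finite_lists_length[of L]]) auto
    then show ?thesis
      by (subst sum_Un) (auto intro!: sum_nonneg prod_list_map_nonneg)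
  qed
  also have "\<dots> \<le> chernoff_coeff t ^ L + chernoff_coeff t ^ L"
  proof -
    have "?S x \<le> chernoff_coeff t ^ L" if "x \<noteq> AB" for x
      using tilted_upper_bound[OF that optimal_tilt_ge_1[OF assms], of ?w L]
        gene_tree_tilt_sum[OF assms that] by simp
    then show ?thesis
      by (intro add_mono) simp_all
  qed
  finally show ?thesis
    by simp
qed

text \<open>The tilted weights \<open>w'\<close> make AB and AC equally likely, and on the event
  \<open>N\<^sub>A\<^sub>C = N\<^sub>A\<^sub>B + 1\<close> the original and tilted sample weights differ exactly by \<open>\<rho>\<^sup>L / z\<close>.\<close>

lemma fail_prob_lower_bound:
  assumes "t \<ge> 0" "L \<ge> 1"
  shows "(pmf (gene_tree_pmf t) AC / chernoff_coeff t)\<^sup>2 * chernoff_coeff t ^ L / (real L + 1)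
       \<le> fail_prob t L"
proof -
  let ?w = "pmf (gene_tree_pmf t)"
  define z where "z = optimal_tilt t"
  define \<rho> where "\<rho> = chernoff_coeff t"
  define w' where "w' a = ?w a * tilt AC AB z a / \<rho>" for a
  have z: "z \<ge> 1"
    using optimal_tilt_ge_1[OF assms(1)] by (simp add: z_def)
  have \<rho>: "\<rho> > 0"
    using chernoff_coeff_pos[OF assms(1)] by (simp add: \<rho>_def)
  have w'_nonneg: "w' a \<ge> 0" for a
    using z \<rho> by (simp add: w'_def tilt_def)
  have w'_total: "sum w' UNIV = 1"
    using gene_tree_tilt_sum[OF assms(1), of AC] \<rho> by (simp add: w'_def z_def \<rho>_def flip: sum_divide_distrib)
  have w'_symmetric: "w' AC = w' AB"
    using gene_tree_tilt_balance[OF assms(1)] by (simp add: w'_def tilt_def z_def)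
  have "?w BC = ?w AC"
    using pmf_gene_tree_pmf[OF assms(1)] by simp
  then have w'_AC_BC: "w' AC * w' BC = ?w AC ^ 2 * z / \<rho>\<^sup>2"
    by (simp add: w'_def tilt_def power2_eq_square)
  let ?E = "{xs. length xs = L \<and> count_diff AC AB xs = 1}"
  have untilt: "prod_list (map ?w xs) = \<rho> ^ L / z * prod_list (map w' xs)" if "xs \<in> ?E" for xs
  proof -
    have "w' = (\<lambda>a. ?w a * tilt AC AB z a * inverse \<rho>)"
      by (simp add: fun_eq_iff w'_def divide_inverse)
    then have "prod_list (map w' xs) = prod_list (map ?w xs) * prod_list (map (tilt AC AB z) xs) / \<rho> ^ L"
      using that by (simp add: prod_list_map_mult map_replicate_const power_inverse divide_inverse)
    also have "prod_list (map (tilt AC AB z) xs) = z"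
      using that z by (simp add: prod_list_tilt)
    finally show ?thesis
      using z \<rho> by (simp add: field_simps)
  qed
  have "(?w AC / \<rho>)\<^sup>2 * \<rho> ^ L / (real L + 1) = \<rho> ^ L / z * (w' AC * w' BC / (real L + 1))"
    using z \<rho> by (simp add: w'_AC_BC power_divide)
  also have "\<dots> \<le> \<rho> ^ L / z * (\<Sum>xs\<in>?E. prod_list (map w' xs))"
    using count_diff_eq_one_lower_bound[OF w'_nonneg w'_total w'_symmetric _ _ _ assms(2)] z \<rho>
    by (intro mult_left_mono) auto
  also have "\<dots> = (\<Sum>xs\<in>?E. prod_list (map ?w xs))"
    by (simp add: sum_distrib_left untilt)
  also have "\<dots> \<le> fail_prob t L"
    unfolding fail_prob_eq_sum
    by (intro sum_mono2 finite_subset[OF _ finite_lists_length[of L]]) (auto intro: prod_list_map_nonneg)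
  finally show ?thesis
    by (simp add: \<rho>_def)
qed

lemma fail_prob_exponent:
  assumes "t \<ge> 0"
  shows "(\<lambda>L. - (ln (fail_prob t L) / real L)) \<longlonglongrightarrow> alpha_Rstar t"
proof -
  have "pmf (gene_tree_pmf t) AC > 0"
    by (simp only: pmf_gene_tree_pmf(2)[OF assms]) simp
  then have "(\<lambda>L. - (ln (fail_prob t L) / real L)) \<longlonglongrightarrow> - ln (chernoff_coeff t)"
    using chernoff_coeff_pos[OF assms] fail_prob_lower_bound[OF assms] fail_prob_upper_bound[OF assms]
    by (intro ln_rate_squeeze[where c = "(pmf (gene_tree_pmf t) AC / chernoff_coeff t)\<^sup>2" and C = 2])
      simp_all
  then show ?thesis
    by (simp add: alpha_Rstar_def chernoff_coeff_def)
qed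

lemma alpha_Rstar_eq:
  "alpha_Rstar t = - ln ((2 * sqrt (exp (- t) * (3 - 2 * exp (- t))) + exp (- t)) / 3)"
proof -
  have "sqrt (1/3 * exp (- t) * (1 - 2/3 * exp (- t))) = sqrt (exp (- t) * (3 - 2 * exp (- t)) / 3\<^sup>2)"
    by (simp add: field_simps power2_eq_square)
  also have "\<dots> = sqrt (exp (- t) * (3 - 2 * exp (- t))) / 3"
    by (simp only: real_sqrt_divide real_sqrt_abs)
  finally have sqrt_eq: "sqrt (1/3 * exp (- t) * (1 - 2/3 * exp (- t)))
      = sqrt (exp (- t) * (3 - 2 * exp (- t))) / 3" .
  show ?thesis
    unfolding alpha_Rstar_def sqrt_eq by (simp add: field_simps)
qed

lemma alpha_Rstar_at_0: "(\<lambda>t. alpha_Rstar t - 3/4 * t ^ 2) \<in> O[at_right 0](\<lambda>t. t ^ 3)"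
  unfolding alpha_Rstar_eq by real_asymp

lemma alpha_Rstar_at_top: "((\<lambda>t. alpha_Rstar t - t / 2) \<longlongrightarrow> - (1/2) * ln (4/3)) at_top"
proof -
  have "((\<lambda>t. alpha_Rstar t - t / 2) \<longlongrightarrow> - ln (2 * 3 powr (1 / 2) / 3)) at_top"
    unfolding alpha_Rstar_eq by real_asymp
  moreover have "2 * 3 powr (1 / 2) / 3 = (4 / 3 :: real) powr (1 / 2)"
    by (simp add: powr_half_sqrt real_sqrt_divide field_simps)
  ultimately show ?thesis
    by (simp add: ln_powr)
qed

theorem mainTheorem2:
  shows "(\<forall>t::real. t \<ge> 0 \<longrightarrow>
            (\<lambda>L::nat. - (ln (fail_prob t L) / real L)) \<longlonglongrightarrow> alpha_Rstar t)
       \<and> (\<lambda>t. alpha_Rstar t - 3/4 * t ^ 2) \<in> O[at_right 0](\<lambda>t. t ^ 3)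
       \<and> ((\<lambda>t. alpha_Rstar t - t / 2) \<longlongrightarrow> - (1/2) * ln (4/3)) at_top"
  using fail_prob_exponent alpha_Rstar_at_0 alpha_Rstar_at_top by blast

end
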